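(* Let $\mathcal{L}$ be the set of loss functions that are both mixable and proper, and let $E$ be the set of tuples $(\gamma^1,\dots,\gamma^N,\eta^1,\dots,\eta^N,\lambda^1,\dots,\lambda^N)\in[0,1]^N\times(0,\infty)^N\times\mathcal{L}^N$ such that $\lambda^n$ is $\eta^n$-mixable for all $n=1,\dots,N$. Fix $n\in\{1,\dots,N\}$ and define $Q^n:(E\times[0,1]\times\{0,1\})^*\to[0,\infty]$ by $$Q^n(e_1,\pi_1,\omega_1,\dots,e_T,\pi_T,\omega_T):=\prod_{t=1}^T\exp\Bigl(\eta_t^n\bigl(\lambda_t^n(\pi_t,\omega_t)-\lambda_t^n(\gamma_t^n,\omega_t)\bigr)\Bigr),$$ where $e_t=(\gamma_t^1,\dots,\gamma_t^N,\eta_t^1,\dots,\eta_t^N,\lambda_t^1,\dots,\lambda_t^N)$ and the empty product equals $1$. Then $Q^n$ is a supermartingale.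
   Context: A loss function is a map $\lambda:[0,1]\times\{0,1\}\to[0,\infty]$ satisfying: (1) $\lambda(\gamma,0)$, $\lambda(\gamma,1)$ continuous in $\gamma\in[0,1]$ (standard topology on $[0,\infty]$); (2) some $\gamma$ has both values finite; (3) no $\gamma$ has both values infinite. Superprediction set: $\Sigma_\lambda=\{(x,y)\in[0,\infty)^2:\exists\gamma\ \lambda(\gamma,0)\le x,\ \lambda(\gamma,1)\le y\}$. $\lambda$ is $\eta$-mixable ($\eta>0$) if $\{(e^{-\eta x},e^{-\eta y}):(x,y)\in\Sigma_\lambda\}$ is convex; mixable if $\eta$-mixable for some $\eta>0$; proper if $\pi\lambda(\pi,1)+(1-\pi)\lambda(\pi,0)\le\pi\lambda(\pi',1)+(1-\pi)\lambda(\pi',0)$ for all $\pi,\pi'\in[0,1]$. A function $S:(E\times[0,1]\times\{0,1\})^*\to(-\infty,\infty]$ is a supermartingale if for any $T$, any $e_1,\dots,e_T\in E$, any $\pi_1,\dots,\pi_T\in[0,1]$ and any $\omega_1,\dots,\omega_{T-1}\in\{0,1\}$: $\pi_T S(e_1,\pi_1,\omega_1,\dots,e_T,\pi_T,1)+(1-\pi_T)S(e_1,\pi_1,\omega_1,\dots,e_T,\pi_T,0)\le S(e_1,\pi_1,\omega_1,\dots,e_{T-1},\pi_{T-1},\omega_{T-1})$. *)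

theory Defs
  imports "HOL-Analysis.Analysis" "HOL-Library.Extended_Nonnegative_Real" "HOL-Library.FuncSet"
begin

type_synonym loss = "real \<Rightarrow> bool \<Rightarrow> ennreal"
  (* \<lambda> \<gamma> \<omega>, with \<omega> = True encoding outcome 1, False encoding outcome 0;
     only the values for \<gamma> \<in> [0,1] matter *)

definition loss_function :: "loss \<Rightarrow> bool" where
  "loss_function l \<longleftrightarrow>
     continuous_on {0..1} (\<lambda>\<gamma>. l \<gamma> False) \<and>
     continuous_on {0..1} (\<lambda>\<gamma>. l \<gamma> True) \<and>
     (\<exists>\<gamma>\<in>{0..1}. l \<gamma> False < \<infinity> \<and> l \<gamma> True < \<infinity>) \<and>
     (\<forall>\<gamma>\<in>{0..1}. \<not> (l \<gamma> False = \<infinity> \<and> l \<gamma> True = \<infinity>))"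

definition superprediction :: "loss \<Rightarrow> (real \<times> real) set" where
  "superprediction l = {(x, y). 0 \<le> x \<and> 0 \<le> y \<and>
      (\<exists>\<gamma>\<in>{0..1}. l \<gamma> False \<le> ennreal x \<and> l \<gamma> True \<le> ennreal y)}"

definition eta_mixable :: "real \<Rightarrow> loss \<Rightarrow> bool" where
  "eta_mixable \<eta> l \<longleftrightarrow> 0 < \<eta> \<and>
     convex ((\<lambda>(x, y). (exp (- \<eta> * x), exp (- \<eta> * y))) ` superprediction l)"

definition mixable :: "loss \<Rightarrow> bool" where
  "mixable l \<longleftrightarrow> (\<exists>\<eta>>0. eta_mixable \<eta> l)"

definition proper :: "loss \<Rightarrow> bool" where
  "proper l \<longleftrightarrow> (\<forall>\<pi>\<in>{0..1}. \<forall>\<pi>'\<in>{0..1}.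
     ennreal \<pi> * l \<pi> True + ennreal (1 - \<pi>) * l \<pi> False
       \<le> ennreal \<pi> * l \<pi>' True + ennreal (1 - \<pi>) * l \<pi>' False)"

definition Lset :: "loss set" where
  "Lset = {l. loss_function l \<and> mixable l \<and> proper l}"

(* an element e = (\<gamma>^1..\<gamma>^N, \<eta>^1..\<eta>^N, \<lambda>^1..\<lambda>^N), components indexed by {1..N} *)
type_synonym expert = "(nat \<Rightarrow> real) \<times> (nat \<Rightarrow> real) \<times> (nat \<Rightarrow> loss)"

definition Eset :: "nat \<Rightarrow> expert set" where
  "Eset N = {(g, h, l). g \<in> {1..N} \<rightarrow>\<^sub>E {0..1} \<and> h \<in> {1..N} \<rightarrow>\<^sub>E {0<..} \<and>
       l \<in> {1..N} \<rightarrow>\<^sub>E Lset \<and> (\<forall>k\<in>{1..N}. eta_mixable (h k) (l k))}"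

(* exp(\<eta>(a - b)) in [0,\<infinity>] for a, b \<in> [0,\<infinity>], with exp(\<infinity>) = \<infinity>, exp(-\<infinity>) = 0
   and the convention \<infinity> - \<infinity> = 0 *)
definition exp_diff :: "real \<Rightarrow> ennreal \<Rightarrow> ennreal \<Rightarrow> ennreal" where
  "exp_diff \<eta> a b =
     (if a = \<infinity> \<and> b = \<infinity> then 1
      else if a = \<infinity> then \<infinity>
      else if b = \<infinity> then 0
      else ennreal (exp (\<eta> * (enn2real a - enn2real b))))"

definition Q :: "nat \<Rightarrow> (expert \<times> real \<times> bool) list \<Rightarrow> ennreal" where
  "Q n xs = prod_list (map (\<lambda>((g, h, l), p, w). exp_diff (h n) (l n p w) (l n (g n) w)) xs)"

definition supermartingale :: "'e set \<Rightarrow> (('e \<times> real \<times> bool) list \<Rightarrow> ereal) \<Rightarrow> bool" where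
  "supermartingale E S \<longleftrightarrow>
     (\<forall>xs e p. (\<forall>(e', p', w)\<in>set xs. e' \<in> E \<and> p' \<in> {0..1}) \<longrightarrow> e \<in> E \<longrightarrow> p \<in> {0..1} \<longrightarrow>
        ereal p * S (xs @ [(e, p, True)]) + ereal (1 - p) * S (xs @ [(e, p, False)]) \<le> S xs)"

end

theory Submission
  imports Defs
begin

text \<open>
  Write \<open>\<lambda>\<^sub>\<omega>(\<gamma>) = \<lambda>(\<gamma>, \<omega>)\<close>. Under the coordinatewise map \<open>x \<mapsto> exp (-\<eta> x)\<close> the superprediction set of an
  \<open>\<eta>\<close>-mixable loss becomes convex, and properness says that the point coming from the
  prediction \<open>\<pi>\<close> maximises the concave function \<open>(1-\<pi>) ln w\<^sub>0 + \<pi> ln w\<^sub>1\<close> on it. The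
  first-order optimality condition at this maximiser, evaluated at the point coming from
  an expert prediction \<open>\<gamma>\<close>, is exactly
  \<open>\<pi> exp (\<eta> (\<lambda>\<^sub>1(\<pi>) - \<lambda>\<^sub>1(\<gamma>))) + (1-\<pi>) exp (\<eta> (\<lambda>\<^sub>0(\<pi>) - \<lambda>\<^sub>0(\<gamma>))) \<le> 1\<close>,
  i.e. one step of \<open>Q\<^sup>n\<close> does not increase its conditional expectation. Infinite losses
  are handled by properness (losses are finite strictly inside \<open>[0,1]\<close>) and by
  continuity of the loss at the endpoints.
\<close>

lemma convex_weighted_log_optimum_imp_ratio_le:
  fixes C :: "(real \<times> real) set"
  assumes "convex C" and u: "(u0, u1) \<in> C" "0 < u0" "0 < u1"
    and opt: "\<And>w0 w1. (w0, w1) \<in> C \<Longrightarrow> 0 < w0 \<Longrightarrow> 0 < w1 \<Longrightarrow>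
                (1 - p) * ln w0 + p * ln w1 \<le> (1 - p) * ln u0 + p * ln u1"
    and v: "(v0, v1) \<in> C" "0 < v0" "0 < v1"
  shows "(1 - p) * (v0 / u0) + p * (v1 / u1) \<le> 1"
proof (rule ccontr)
  define f where "f t = (1 - p) * ln (u0 + t * (v0 - u0)) + p * ln (u1 + t * (v1 - u1))" for t
  define D where "D = (1 - p) * ((v0 - u0) / u0) + p * ((v1 - u1) / u1)"
  assume "\<not> ?thesis"
  then have "0 < D" using u by (simp add: D_def field_simps)
  have "DERIV f 0 :> D"
    unfolding f_def D_def using u by (auto intro!: derivative_eq_intros simp: field_simps)
  from DERIV_pos_inc_right[OF this \<open>0 < D\<close>]
  obtain d where "0 < d" and inc: "\<And>h. 0 < h \<Longrightarrow> h < d \<Longrightarrow> f 0 < f h"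
    by auto
  define h where "h = min (d / 2) 1"
  have h: "0 < h" "h < d" "h \<le> 1" using \<open>0 < d\<close> by (auto simp: h_def)
  have "(1 - h) *\<^sub>R (u0, u1) + h *\<^sub>R (v0, v1) \<in> C"
    using convexD[OF \<open>convex C\<close> u(1) v(1), of "1 - h" h] h by simp
  then have w: "((1 - h) * u0 + h * v0, (1 - h) * u1 + h * v1) \<in> C" by simp
  have "0 < (1 - h) * u0 + h * v0" "0 < (1 - h) * u1 + h * v1"
    using h u v by (auto intro: add_nonneg_pos)
  from opt[OF w this] have "f h \<le> f 0" by (simp add: f_def algebra_simps)
  with inc[OF h(1,2)] show False by simp
qed

lemma proper_loss_finite_on_interior:
  assumes "loss_function l" "proper l" "0 < x" "x < 1"
  shows "l x True \<noteq> \<infinity>" "l x False \<noteq> \<infinity>"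
proof -
  from assms(1) obtain y where y: "y \<in> {0..1}" "l y False < \<infinity>" "l y True < \<infinity>"
    by (auto simp: loss_function_def)
  have "ennreal x * l x True + ennreal (1 - x) * l x False
      \<le> ennreal x * l y True + ennreal (1 - x) * l y False"
    using assms y by (auto simp: proper_def)
  also have "\<dots> < \<infinity>"
    using y by (simp add: ennreal_mult_less_top)
  finally have "ennreal x * l x True < \<infinity>" "ennreal (1 - x) * l x False < \<infinity>"
    by (simp_all add: ennreal_add_less_top)
  then show "l x True \<noteq> \<infinity>" "l x False \<noteq> \<infinity>"
    using assms(3,4) by (auto simp: ennreal_mult_less_top)
qed

lemma proper_expected_loss_le_superprediction:
  assumes "proper l" and p: "p \<in> {0..1}" and fp: "l p True \<noteq> \<infinity>" "l p False \<noteq> \<infinity>"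
    and "(x, y) \<in> superprediction l"
  shows "p * enn2real (l p True) + (1 - p) * enn2real (l p False) \<le> p * y + (1 - p) * x"
proof -
  from \<open>(x, y) \<in> superprediction l\<close> obtain \<gamma> where
    \<gamma>: "\<gamma> \<in> {0..1}" "l \<gamma> False \<le> ennreal x" "l \<gamma> True \<le> ennreal y" and "0 \<le> x" "0 \<le> y"
    by (auto simp: superprediction_def)
  have "ennreal (p * enn2real (l p True) + (1 - p) * enn2real (l p False))
      = ennreal p * l p True + ennreal (1 - p) * l p False"
    using p fp by (simp add: ennreal_plus ennreal_mult' ennreal_enn2real_if)
  also have "\<dots> \<le> ennreal p * l \<gamma> True + ennreal (1 - p) * l \<gamma> False"
    using \<open>proper l\<close> p \<gamma> by (auto simp: proper_def)
  also have "\<dots> \<le> ennreal p * ennreal y + ennreal (1 - p) * ennreal x"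
    using \<gamma> by (intro add_mono mult_left_mono) auto
  also have "\<dots> = ennreal (p * y + (1 - p) * x)"
    using p \<open>0 \<le> x\<close> \<open>0 \<le> y\<close> by (simp add: ennreal_plus ennreal_mult')
  finally show ?thesis
    using p \<open>0 \<le> x\<close> \<open>0 \<le> y\<close> by (subst (asm) ennreal_le_iff) auto
qed

lemma proper_mixable_expected_exp_regret_le_1:
  assumes "proper l" and mix: "eta_mixable \<eta> l" and p: "p \<in> {0..1}"
    and fp: "l p True \<noteq> \<infinity>" "l p False \<noteq> \<infinity>" and g: "g \<in> {0..1}"
    and fg: "l g True \<noteq> \<infinity>" "l g False \<noteq> \<infinity>"
  shows "p * exp (\<eta> * (enn2real (l p True) - enn2real (l g True)))
       + (1 - p) * exp (\<eta> * (enn2real (l p False) - enn2real (l g False))) \<le> 1"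
proof -
  define P0 P1 G0 G1 where "P0 = enn2real (l p False)" "P1 = enn2real (l p True)"
    "G0 = enn2real (l g False)" "G1 = enn2real (l g True)"
  define E where "E = (\<lambda>(x, y). (exp (- \<eta> * x), exp (- \<eta> * y)))"
  define C where "C = E ` superprediction l"
  have "0 < \<eta>" "convex C" using mix by (auto simp: eta_mixable_def C_def E_def)
  have in_superprediction: "(enn2real (l q False), enn2real (l q True)) \<in> superprediction l"
    if "q \<in> {0..1}" "l q True \<noteq> \<infinity>" "l q False \<noteq> \<infinity>" for q
    using that by (auto simp: superprediction_def ennreal_enn2real_if)
  have u: "(exp (- \<eta> * P0), exp (- \<eta> * P1)) \<in> C"
    using in_superprediction[OF p fp] by (force simp: C_def E_def P0_P1_G0_G1_def)
  have v: "(exp (- \<eta> * G0), exp (- \<eta> * G1)) \<in> C"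
    using in_superprediction[OF g fg] by (force simp: C_def E_def P0_P1_G0_G1_def)
  have opt: "(1 - p) * ln w0 + p * ln w1 \<le> (1 - p) * ln (exp (- \<eta> * P0)) + p * ln (exp (- \<eta> * P1))"
    if "(w0, w1) \<in> C" for w0 w1
  proof -
    from that obtain x y where xy: "(x, y) \<in> superprediction l"
      and "w0 = exp (- \<eta> * x)" "w1 = exp (- \<eta> * y)"
      by (auto simp: C_def E_def)
    moreover have "\<eta> * (p * P1 + (1 - p) * P0) \<le> \<eta> * (p * y + (1 - p) * x)"
      using proper_expected_loss_le_superprediction[OF \<open>proper l\<close> p fp xy] \<open>0 < \<eta>\<close>
      by (simp add: P0_P1_G0_G1_def)
    ultimately show ?thesis by (simp add: algebra_simps)
  qed
  have "(1 - p) * (exp (- \<eta> * G0) / exp (- \<eta> * P0)) + p * (exp (- \<eta> * G1) / exp (- \<eta> * P1)) \<le> 1"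
    by (intro convex_weighted_log_optimum_imp_ratio_le[OF \<open>convex C\<close> u _ _ opt v]) auto
  then show ?thesis
    by (simp add: P0_P1_G0_G1_def exp_diff[symmetric] algebra_simps)
qed

lemma at_within_unit_interval_ne_bot:
  fixes g :: real
  assumes "g \<in> {0..1}"
  shows "at g within {0<..<1} \<noteq> bot"
proof -
  have "g islimpt {0<..<1}"
  proof (cases "g < 1")
    case True
    then have "g islimpt {g<..<1}" by (rule islimpt_greaterThanLessThan1)
    then show ?thesis by (rule islimpt_subset) (use assms in auto)
  next
    case False
    then show ?thesis using assms islimpt_greaterThanLessThan2[of 0 "1::real"] by simp
  qed
  then show ?thesis by (simp add: trivial_limit_within)
qed

text \<open>
  The two-outcome bound needs finite losses at \<open>g\<close>; when one of them is infinite only the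
  other term survives, and its bound is obtained as a limit from the interior of \<open>[0,1]\<close>.
\<close>

lemma proper_mixable_exp_regret_le_1:
  assumes "loss_function l" "proper l" and mix: "eta_mixable \<eta> l" and p: "p \<in> {0..1}"
    and fp: "l p True \<noteq> \<infinity>" "l p False \<noteq> \<infinity>" and g: "g \<in> {0..1}" and fg: "l g w \<noteq> \<infinity>"
  shows "(if w then p else 1 - p) * exp (\<eta> * (enn2real (l p w) - enn2real (l g w))) \<le> 1"
proof -
  define F where "F \<gamma> = (if w then p else 1 - p) * exp (\<eta> * (enn2real (l p w) - enn2real (l \<gamma> w)))"
    for \<gamma>
  have interior: "F \<gamma> \<le> 1" if "\<gamma> \<in> {0<..<1}" for \<gamma>
  proof -
    note finite = proper_loss_finite_on_interior[OF \<open>loss_function l\<close> \<open>proper l\<close>]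
    have "p * exp (\<eta> * (enn2real (l p True) - enn2real (l \<gamma> True)))
        + (1 - p) * exp (\<eta> * (enn2real (l p False) - enn2real (l \<gamma> False))) \<le> 1"
      using that finite[of \<gamma>]
      by (intro proper_mixable_expected_exp_regret_le_1[OF \<open>proper l\<close> mix p fp]) auto
    moreover have "0 \<le> p" "0 \<le> 1 - p" using p by auto
    ultimately show ?thesis
      unfolding F_def by (cases w) (auto intro: order_trans[rotated] add_nonneg_nonneg)
  qed
  have "continuous_on {0..1} (\<lambda>\<gamma>. l \<gamma> w)"
    using \<open>loss_function l\<close> by (cases w) (auto simp: loss_function_def)
  then have "((\<lambda>\<gamma>. l \<gamma> w) \<longlongrightarrow> l g w) (at g within {0..1})"
    using g by (simp add: continuous_on_def)
  then have "((\<lambda>\<gamma>. l \<gamma> w) \<longlongrightarrow> l g w) (at g within {0<..<1})"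
    by (rule tendsto_within_subset) auto
  then have "((\<lambda>\<gamma>. l \<gamma> w) \<longlongrightarrow> ennreal (enn2real (l g w))) (at g within {0<..<1})"
    using fg by (simp add: ennreal_enn2real_if)
  then have "(F \<longlongrightarrow> F g) (at g within {0<..<1})"
    unfolding F_def by (intro tendsto_intros) auto
  then have "F g \<le> 1"
    by (rule tendsto_upperbound)
      (use interior at_within_unit_interval_ne_bot[OF g] in \<open>auto simp: eventually_at_filter\<close>)
  then show ?thesis by (simp add: F_def)
qed

lemma exp_diff_le_1:
  assumes "0 < \<eta>" "a \<le> b"
  shows "exp_diff \<eta> a b \<le> 1"
proof (cases "b = \<infinity>")
  case False
  with assms(2) have "a \<noteq> \<infinity>" "enn2real a \<le> enn2real b"
    by (auto simp: top.not_eq_extremum intro: enn2real_mono)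
  with False assms(1) show ?thesis
    by (simp add: exp_diff_def mult_nonneg_nonpos)
qed (auto simp: exp_diff_def)

lemma proper_mixable_expected_exp_diff_le_1:
  assumes "loss_function l" "proper l" and mix: "eta_mixable \<eta> l" and p: "p \<in> {0..1}" and g: "g \<in> {0..1}"
  shows "ennreal p * exp_diff \<eta> (l p True) (l g True)
       + ennreal (1 - p) * exp_diff \<eta> (l p False) (l g False) \<le> 1"
proof -
  have "0 < \<eta>" using mix by (simp add: eta_mixable_def)
  have proper_at_p: "ennreal p * l p True + ennreal (1 - p) * l p False
       \<le> ennreal p * l g True + ennreal (1 - p) * l g False"
    using \<open>proper l\<close> p g by (auto simp: proper_def)
  consider "p = 0" | "p = 1" | "0 < p" "p < 1" using p by fastforce
  then show ?thesis
  proof cases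
    case 1
    then show ?thesis using proper_at_p exp_diff_le_1[OF \<open>0 < \<eta>\<close>] by simp
  next
    case 2
    then show ?thesis using proper_at_p exp_diff_le_1[OF \<open>0 < \<eta>\<close>] by simp
  next
    case 3
    note fp = proper_loss_finite_on_interior[OF \<open>loss_function l\<close> \<open>proper l\<close> 3]
    note term_le_1 = proper_mixable_exp_regret_le_1[OF \<open>loss_function l\<close> \<open>proper l\<close> mix p fp g]
    have "\<not> (l g False = \<infinity> \<and> l g True = \<infinity>)"
      using \<open>loss_function l\<close> g by (auto simp: loss_function_def)
    then consider "l g True \<noteq> \<infinity>" "l g False \<noteq> \<infinity>" | "l g True = \<infinity>" "l g False \<noteq> \<infinity>"
      | "l g True \<noteq> \<infinity>" "l g False = \<infinity>" by blast
    then show ?thesis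
    proof cases
      case 1
      then show ?thesis
        using proper_mixable_expected_exp_regret_le_1[OF \<open>proper l\<close> mix p fp g 1] fp p
        by (simp add: exp_diff_def ennreal_mult'[symmetric] ennreal_plus[symmetric] ennreal_le_1
            del: ennreal_plus)
    next
      case 2
      then show ?thesis
        using term_le_1[of False] fp p by (simp add: exp_diff_def ennreal_mult'[symmetric] ennreal_le_1)
    next
      case 3
      then show ?thesis
        using term_le_1[of True] fp p by (simp add: exp_diff_def ennreal_mult'[symmetric] ennreal_le_1)
    qed
  qed
qed

lemma Q_snoc: "Q n (xs @ [((g, h, l), p, w)]) = Q n xs * exp_diff (h n) (l n p w) (l n (g n) w)"
  by (simp add: Q_def)

theorem lemma3:
  fixes N n :: nat
  assumes "1 \<le> n" and "n \<le> N"
  shows "supermartingale (Eset N) (\<lambda>xs. enn2ereal (Q n xs))"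
  unfolding supermartingale_def
proof (intro allI impI)
  fix xs and e :: expert and p :: real
  assume "e \<in> Eset N" and p: "p \<in> {0..1}"
  obtain g h l where e: "e = (g, h, l)" by (cases e)
  have "loss_function (l n)" "proper (l n)" "eta_mixable (h n) (l n)" "g n \<in> {0..1}"
    using \<open>e \<in> Eset N\<close> assms unfolding e Eset_def Lset_def by (auto simp: PiE_def Pi_def)
  from proper_mixable_expected_exp_diff_le_1[OF this(1-3) p this(4)]
  have step: "ennreal p * exp_diff (h n) (l n p True) (l n (g n) True)
       + ennreal (1 - p) * exp_diff (h n) (l n p False) (l n (g n) False) \<le> 1" .
  have "ereal p * enn2ereal (Q n (xs @ [(e, p, True)])) + ereal (1 - p) * enn2ereal (Q n (xs @ [(e, p, False)]))
      = enn2ereal (Q n xs * (ennreal p * exp_diff (h n) (l n p True) (l n (g n) True)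
          + ennreal (1 - p) * exp_diff (h n) (l n p False) (l n (g n) False)))"
    using p by (simp add: e Q_snoc times_ennreal.rep_eq plus_ennreal.rep_eq algebra_simps)
  also have "\<dots> \<le> enn2ereal (Q n xs)"
    using mult_left_mono[OF step, of "Q n xs"] by (simp add: less_eq_ennreal.rep_eq[symmetric])
  finally show "ereal p * enn2ereal (Q n (xs @ [(e, p, True)]))
      + ereal (1 - p) * enn2ereal (Q n (xs @ [(e, p, False)])) \<le> enn2ereal (Q n xs)" .
qed

end
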